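(* Let $k\neq r$ be jobs with $t_r\le t_k$, and suppose there is a job $j$ such that both $(j,k)$ and $(j,r)$ are red pairs. Let $N^-(x)=\{i:(i,x)\text{ is a red pair}\}$. Then: (a) for every $j'\in N^-(k)$ with $m_{j'}\le m_j$, we have $j'\in N^-(r)$ (so $N^-(k)\cap N^-(r)$ is an initial segment of $N^-(k)$ ordered by $m$); (b) there is no job $j''\in N^-(r)$ with $m_{j''}>m_{j'}$ for all $j'\in N^-(k)$.
   Context: Jobs $j$ have test time $t_j\ge0$ and processing time $p_j\ge0$; $m_j=\max\{t_j,p_j\}$, $\sigma_j=t_j+p_j$. Standing assumption (general position): no two of the $3n$ numbers $t_j,p_j,\sigma_j$ ($j=1,\dots,n$) are equal. Fix constants $\mu>1$ and $0<\nu<1$ with $\mu\nu>1$ and $1+\frac1\mu\le\nu+\nu^2$. A job $j$ is imbalanced if $m_j\ge\mu\min\{t_j,p_j\}$. For distinct jobs $j,k$, the ordered pair $(j,k)$ is a red pair if $j$ is imbalanced, $m_j\ge t_k\ge\nu m_j$, and $p_k\ge\nu t_k$. *)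

theory Defs
  imports Main Complex_Main
begin

text \<open>Jobs are elements of a finite set J; t and p give test and processing times.\<close>

definition mjob :: "('a \<Rightarrow> real) \<Rightarrow> ('a \<Rightarrow> real) \<Rightarrow> 'a \<Rightarrow> real" where
  "mjob t p j = max (t j) (p j)"

definition sigjob :: "('a \<Rightarrow> real) \<Rightarrow> ('a \<Rightarrow> real) \<Rightarrow> 'a \<Rightarrow> real" where
  "sigjob t p j = t j + p j"

definition general_position :: "'a set \<Rightarrow> ('a \<Rightarrow> real) \<Rightarrow> ('a \<Rightarrow> real) \<Rightarrow> bool" where
  "general_position J t p \<longleftrightarrow>
     (\<forall>i\<in>J. \<forall>j\<in>J.
        (i \<noteq> j \<longrightarrow> t i \<noteq> t j \<and> p i \<noteq> p j \<and> sigjob t p i \<noteq> sigjob t p j)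
        \<and> t i \<noteq> p j \<and> t i \<noteq> sigjob t p j \<and> p i \<noteq> sigjob t p j)"

definition imbalanced :: "real \<Rightarrow> ('a \<Rightarrow> real) \<Rightarrow> ('a \<Rightarrow> real) \<Rightarrow> 'a \<Rightarrow> bool" where
  "imbalanced \<mu> t p j \<longleftrightarrow> mjob t p j \<ge> \<mu> * min (t j) (p j)"

definition red_pair :: "real \<Rightarrow> real \<Rightarrow> ('a \<Rightarrow> real) \<Rightarrow> ('a \<Rightarrow> real) \<Rightarrow> 'a \<Rightarrow> 'a \<Rightarrow> bool" where
  "red_pair \<mu> \<nu> t p j k \<longleftrightarrow>
     j \<noteq> k \<and> imbalanced \<mu> t p j \<and> mjob t p j \<ge> t k \<and> t k \<ge> \<nu> * mjob t p j
     \<and> p k \<ge> \<nu> * t k"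

definition red_in :: "'a set \<Rightarrow> real \<Rightarrow> real \<Rightarrow> ('a \<Rightarrow> real) \<Rightarrow> ('a \<Rightarrow> real) \<Rightarrow> 'a \<Rightarrow> 'a set" where
  "red_in J \<mu> \<nu> t p x = {i \<in> J. red_pair \<mu> \<nu> t p i x}"

end

theory Submission
  imports Defs
begin

text \<open>The key observation: if (j, x) is a red pair with x imbalanced and t x > 0, then x is
  imbalanced towards its processing time, p x \<ge> \<mu> t x, since otherwise
  t x \<ge> \<mu> p x \<ge> \<mu>\<nu> t x > t x.  Consequently m x \<ge> \<mu>\<nu> m j > m j, which rules out r among the
  in-neighbours of k below j in (a); and a red pair leaving x reaches a test time at least
  \<nu> p x \<ge> \<mu>\<nu> t x > t x, which rules out k as an in-neighbour of r in (b).  All other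
  memberships are read off the definitions, using t r < t k from general position.\<close>

lemma red_pair_imbalanced_target_processing_ge:
  assumes "red_pair \<mu> \<nu> t p j x" "imbalanced \<mu> t p x" "0 < t x" "0 < \<nu>" "\<mu> * \<nu> > 1"
  shows "\<mu> * t x \<le> p x"
proof (rule ccontr)
  assume "\<not> \<mu> * t x \<le> p x"
  moreover have "0 < \<mu>" using assms(4,5) by (smt (verit) mult_nonpos_nonneg)
  moreover have "\<mu> * min (t x) (p x) \<le> max (t x) (p x)"
    using assms(2) unfolding imbalanced_def mjob_def by simp
  ultimately have "\<mu> * p x \<le> t x"
    by (cases "t x \<le> p x") (auto simp: min_def max_def)
  moreover have "\<mu> * (\<nu> * t x) \<le> \<mu> * p x"
    using assms(1) \<open>0 < \<mu>\<close> unfolding red_pair_def by simp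
  ultimately have "(\<mu> * \<nu>) * t x \<le> 1 * t x" by (simp add: mult.assoc)
  with assms(3,5) show False by (simp add: mult_le_cancel_right)
qed

lemma red_pair_imbalanced_target_mjob_gt:
  assumes "red_pair \<mu> \<nu> t p j x" "imbalanced \<mu> t p x" "0 < t x" "0 < \<nu>" "\<mu> * \<nu> > 1"
  shows "mjob t p j < mjob t p x"
proof -
  have "0 < mjob t p j" "\<nu> * mjob t p j \<le> t x"
    using assms(1,3) unfolding red_pair_def by auto
  have "0 < \<mu>" using assms(4,5) by (smt (verit) mult_nonpos_nonneg)
  have "1 * mjob t p j < (\<mu> * \<nu>) * mjob t p j"
    using assms(5) \<open>0 < mjob t p j\<close> by (rule mult_strict_right_mono)
  also have "\<dots> \<le> \<mu> * t x"
    using \<open>\<nu> * mjob t p j \<le> t x\<close> \<open>0 < \<mu>\<close> by (simp add: mult.assoc)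
  also have "\<dots> \<le> mjob t p x"
    using red_pair_imbalanced_target_processing_ge[OF assms] unfolding mjob_def by simp
  finally show ?thesis by simp
qed

lemma red_pair_chain_test_time_gt:
  assumes "red_pair \<mu> \<nu> t p j k" "red_pair \<mu> \<nu> t p k r" "0 < t k" "0 < \<nu>" "\<mu> * \<nu> > 1"
  shows "t k < t r"
proof -
  have "imbalanced \<mu> t p k" "\<nu> * mjob t p k \<le> t r"
    using assms(2) unfolding red_pair_def by auto
  have "1 * t k < (\<mu> * \<nu>) * t k"
    using assms(5,3) by (rule mult_strict_right_mono)
  also have "\<dots> = \<nu> * (\<mu> * t k)" by simp
  also have "\<dots> \<le> \<nu> * mjob t p k"
    using red_pair_imbalanced_target_processing_ge[OF assms(1) \<open>imbalanced \<mu> t p k\<close> assms(3-5)]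
      assms(4) unfolding mjob_def by simp
  also have "\<dots> \<le> t r" by fact
  finally show ?thesis by simp
qed

lemma red_pairs_common_source_test_time_pos:
  assumes "red_pair \<mu> \<nu> t p j k" "red_pair \<mu> \<nu> t p j r" "t r < t k" "0 < \<nu>" "\<nu> < 1"
  shows "0 < t r"
proof -
  have "0 < (1 - \<nu>) * mjob t p j"
    using assms(1-3) unfolding red_pair_def by (simp add: algebra_simps)
  with assms(5) have "0 < mjob t p j"
    by (simp add: zero_less_mult_iff)
  with assms(2,4) show ?thesis
    unfolding red_pair_def by (smt (verit) mult_pos_pos)
qed

lemma red_in_lower_part_shared:
  assumes "red_pair \<mu> \<nu> t p j r" "t r < t k" "0 < t r" "0 < \<nu>" "\<mu> * \<nu> > 1"
    and "j' \<in> red_in J \<mu> \<nu> t p k" "mjob t p j' \<le> mjob t p j"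
  shows "j' \<in> red_in J \<mu> \<nu> t p r"
proof -
  have j': "j' \<in> J" "imbalanced \<mu> t p j'" "t k \<le> mjob t p j'"
    using assms(6) unfolding red_in_def red_pair_def by auto
  have "j' \<noteq> r"
    using red_pair_imbalanced_target_mjob_gt[OF assms(1) _ assms(3-5)] j'(2) assms(7) by force
  moreover have "\<nu> * mjob t p j' \<le> \<nu> * mjob t p j" using assms(4,7) by simp
  ultimately show ?thesis
    using assms(1,2) j' unfolding red_in_def red_pair_def by auto
qed

lemma red_in_no_dominating_element:
  assumes "red_pair \<mu> \<nu> t p j k" "j \<in> J" "t r < t k" "0 < t r" "0 < \<nu>" "\<mu> * \<nu> > 1"
  shows "\<not> (\<exists>q\<in>red_in J \<mu> \<nu> t p r. \<forall>j'\<in>red_in J \<mu> \<nu> t p k. mjob t p q > mjob t p j')"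
proof
  assume "\<exists>q\<in>red_in J \<mu> \<nu> t p r. \<forall>j'\<in>red_in J \<mu> \<nu> t p k. mjob t p q > mjob t p j'"
  then obtain q where q: "q \<in> red_in J \<mu> \<nu> t p r"
    and dominates: "\<forall>j'\<in>red_in J \<mu> \<nu> t p k. mjob t p q > mjob t p j'" by blast
  have "mjob t p j < mjob t p q"
    using dominates assms(1,2) unfolding red_in_def by auto
  moreover have "q \<noteq> k"
    using red_pair_chain_test_time_gt[OF assms(1)] q assms(3-6) unfolding red_in_def by force
  ultimately have "q \<in> red_in J \<mu> \<nu> t p k"
    using q assms(1,3) unfolding red_in_def red_pair_def by auto
  with dominates show False by blast
qed

theorem mainTheorem7:
  fixes J :: "'a set" and t p :: "'a \<Rightarrow> real" and \<mu> \<nu> :: real and j k r :: 'a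
  assumes finJ: "finite J"
    and nonneg: "\<forall>i\<in>J. t i \<ge> 0 \<and> p i \<ge> 0"
    and gp: "general_position J t p"
    and mu: "\<mu> > 1" and nu0: "0 < \<nu>" and nu1: "\<nu> < 1" and munu: "\<mu> * \<nu> > 1"
    and ineq: "1 + 1 / \<mu> \<le> \<nu> + \<nu>\<^sup>2"
    and jobs: "j \<in> J" "k \<in> J" "r \<in> J"
    and kr: "k \<noteq> r" and tkr: "t r \<le> t k"
    and redk: "red_pair \<mu> \<nu> t p j k" and redr: "red_pair \<mu> \<nu> t p j r"
  shows "(\<forall>j'\<in>red_in J \<mu> \<nu> t p k. mjob t p j' \<le> mjob t p j \<longrightarrow> j' \<in> red_in J \<mu> \<nu> t p r)
       \<and> \<not> (\<exists>j''\<in>red_in J \<mu> \<nu> t p r. \<forall>j'\<in>red_in J \<mu> \<nu> t p k. mjob t p j'' > mjob t p j')"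
proof -
  have "t k \<noteq> t r" using gp kr jobs unfolding general_position_def by blast
  with tkr have tr_lt_tk: "t r < t k" by simp
  have tr_pos: "0 < t r"
    using red_pairs_common_source_test_time_pos[OF redk redr tr_lt_tk nu0 nu1] .
  show ?thesis
    using red_in_lower_part_shared[OF redr tr_lt_tk tr_pos nu0 munu]
      red_in_no_dominating_element[OF redk jobs(1) tr_lt_tk tr_pos nu0 munu]
    by blast
qed

end
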